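(* Let $R>0$ and let $f$ be analytic in an open neighbourhood of the closed disk $\overline{D_R}$, and assume $f$ is not a polynomial. Then for every integer $s\ge0$ there exists a finite $p(s)$ such that $f$ is $(s,p(s))$-valent in $D_R$.
   Context: $D_r=\{z\in\mathbb C:|z|<r\}$. A function $f$ regular in a domain $\Omega$ is $(s,p)$-valent in $\Omega$ if for every polynomial $P$ of degree at most $s$ the equation $f(z)=P(z)$ has at most $p$ solutions in $\Omega$, counted with multiplicity. *)

theory Defs
  imports "HOL-Analysis.Analysis" "HOL-Computational_Algebra.Polynomial"
begin

definition zero_mult :: "(complex \<Rightarrow> complex) \<Rightarrow> complex \<Rightarrow> enat" where
  "zero_mult g z =
     (if \<exists>n. (deriv ^^ n) g z \<noteq> 0
      then enat (LEAST n. (deriv ^^ n) g z \<noteq> 0) else \<infinity>)"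

text \<open>f is (s,p)-valent in \<Omega>: for every polynomial P of degree at most s, the
  equation f z = P z has at most p solutions in \<Omega>, counted with multiplicity
  (every finite set of points of \<Omega> carries total multiplicity at most p).\<close>
definition sp_valent :: "nat \<Rightarrow> nat \<Rightarrow> (complex \<Rightarrow> complex) \<Rightarrow> complex set \<Rightarrow> bool" where
  "sp_valent s p f \<Omega> \<longleftrightarrow>
     (\<forall>P :: complex poly. degree P \<le> s \<longrightarrow>
        (\<forall>S. finite S \<longrightarrow> S \<subseteq> \<Omega> \<longrightarrow>
           (\<Sum>z\<in>S. zero_mult (\<lambda>w. f w - poly P w) z) \<le> enat p))"

end

theory Submission
  imports Defs "HOL-Complex_Analysis.Complex_Analysis"
begin

text \<open>
  f is holomorphic on a slightly larger disc. It suffices to bound, uniformly, the number of zeros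
  in the disc of radius R of the functions c0 f - (c1 + c2 z + ... + c(s+1) z^s).
  Each f - P with deg P \<le> s is a nonzero multiple of such a function whose coefficient vector
  has maximum norm 1, and these vectors form a compact set. None of these functions vanishes
  identically, because f is not a polynomial. For each of them Rouche's theorem on a circle
  free of its zeros keeps the zero count constant for nearby coefficient vectors, so the count is
  locally bounded, and by compactness it is bounded.
\<close>

section \<open>Zeros of holomorphic functions and their multiplicities\<close>

lemma holomorphic_finite_zeros_in_compact:
  assumes "f holomorphic_on S" "open S" "connected S" "compact K" "K \<subseteq> S" "w \<in> S" "f w \<noteq> 0"
  shows "finite {z\<in>K. f z = 0}"
proof (cases "f constant_on S")
  case True
  then have "{z\<in>K. f z = 0} = {}"
    using assms(5-7) by (auto simp: constant_on_def)
  then show ?thesis by (metis finite.emptyI)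
next
  case False
  then show ?thesis using holomorphic_compact_finite_zeros assms(1-5) by blast
qed

lemma ex_higher_deriv_nonzero:
  assumes "f holomorphic_on S" "open S" "connected S" "w \<in> S" "f w \<noteq> 0" "z \<in> S"
  shows "\<exists>n. (deriv ^^ n) f z \<noteq> 0"
  using holomorphic_fun_eq_0_on_connected[OF assms(1-3) _ assms(6,4)] assms(5) by blast

lemma zero_mult_eq_0: "f z \<noteq> 0 \<Longrightarrow> zero_mult f z = 0"
  using exI[of "\<lambda>n. (deriv ^^ n) f z \<noteq> 0" 0] by (auto simp: zero_mult_def zero_enat_def intro!: Least_equality)

lemma zero_mult_eq_zorder:
  assumes "f analytic_on {z}" "(deriv ^^ n) f z \<noteq> 0"
  shows "\<exists>m. zero_mult f z = enat m \<and> zorder f z = int m"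
proof -
  define m where "m = (LEAST n. (deriv ^^ n) f z \<noteq> 0)"
  have "(deriv ^^ m) f z \<noteq> 0" unfolding m_def using assms(2) by (rule LeastI)
  moreover have "\<And>i. i < m \<Longrightarrow> (deriv ^^ i) f z = 0"
    unfolding m_def using not_less_Least by blast
  ultimately have "zorder f z = int m"
    by (intro zorder_zero_eqI' assms(1)) auto
  moreover have "zero_mult f z = enat m"
    using assms(2) by (auto simp: zero_mult_def m_def)
  ultimately show ?thesis by blast
qed

lemma zero_mult_cmult:
  assumes "f analytic_on {z}" "c \<noteq> 0"
  shows "zero_mult (\<lambda>w. c * f w) z = zero_mult f z"
  using assms by (simp add: zero_mult_def higher_deriv_cmult')

lemma sum_zero_mult_eq_zorder:
  assumes "f holomorphic_on S" "open S" "connected S" "w \<in> S" "f w \<noteq> 0" "Z \<subseteq> S"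
  shows "(\<Sum>z\<in>Z. zero_mult f z) = enat (nat (\<Sum>z\<in>Z. zorder f z))"
proof -
  have "\<forall>z\<in>Z. \<exists>m. zero_mult f z = enat m \<and> zorder f z = int m"
  proof
    fix z assume "z \<in> Z"
    with assms have "z \<in> S" by blast
    then show "\<exists>m. zero_mult f z = enat m \<and> zorder f z = int m"
      using ex_higher_deriv_nonzero[OF assms(1-5)] assms(1,2)
      by (metis analytic_at zero_mult_eq_zorder)
  qed
  then obtain m where m: "\<And>z. z \<in> Z \<Longrightarrow> zero_mult f z = enat (m z) \<and> zorder f z = int (m z)"
    by metis
  have "(\<Sum>z\<in>Z. zero_mult f z) = (\<Sum>z\<in>Z. of_nat (m z))"
    using m by (simp add: of_nat_eq_enat)
  also have "\<dots> = enat (\<Sum>z\<in>Z. m z)"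
    unfolding of_nat_sum[symmetric] by (rule of_nat_eq_enat)
  also have "(\<Sum>z\<in>Z. m z) = nat (\<Sum>z\<in>Z. zorder f z)"
    using m by (simp del: of_nat_sum add: of_nat_sum[symmetric])
  finally show ?thesis .
qed

definition zero_count_le :: "(complex \<Rightarrow> complex) \<Rightarrow> complex set \<Rightarrow> nat \<Rightarrow> bool" where
  "zero_count_le h \<Omega> N \<longleftrightarrow> (\<forall>S. finite S \<longrightarrow> S \<subseteq> \<Omega> \<longrightarrow> (\<Sum>z\<in>S. zero_mult h z) \<le> enat N)"

lemma zero_count_le_mono:
  assumes "zero_count_le h \<Omega> N" "N \<le> M"
  shows "zero_count_le h \<Omega> M"
  unfolding zero_count_le_def
proof (intro allI impI)
  fix S assume "finite S" "S \<subseteq> \<Omega>"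
  then have "(\<Sum>z\<in>S. zero_mult h z) \<le> enat N"
    using assms(1) by (simp add: zero_count_le_def)
  also have "\<dots> \<le> enat M" using assms(2) by simp
  finally show "(\<Sum>z\<in>S. zero_mult h z) \<le> enat M" .
qed

lemma zero_count_le_cmult:
  assumes "h holomorphic_on U" "open U" "\<Omega> \<subseteq> U" "a \<noteq> 0"
  shows "zero_count_le (\<lambda>w. a * h w) \<Omega> N \<longleftrightarrow> zero_count_le h \<Omega> N"
proof -
  have "zero_mult (\<lambda>w. a * h w) z = zero_mult h z" if "z \<in> \<Omega>" for z
    using that assms by (intro zero_mult_cmult) (auto simp: analytic_at)
  then show ?thesis
    unfolding zero_count_le_def by (metis (no_types, lifting) subsetD sum.cong)
qed

lemma sum_zero_mult_le_zeros:
  assumes "finite Z" "{z\<in>S. h z = 0} \<subseteq> Z"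
  shows "(\<Sum>z\<in>S. zero_mult h z) \<le> (\<Sum>z\<in>Z. zero_mult h z)"
proof (cases "finite S")
  case True
  moreover have "\<forall>z\<in>S - S \<inter> Z. zero_mult h z = 0"
  proof
    fix z assume "z \<in> S - S \<inter> Z"
    then have "h z \<noteq> 0" using assms(2) by blast
    then show "zero_mult h z = 0" by (rule zero_mult_eq_0)
  qed
  ultimately have "(\<Sum>z\<in>S. zero_mult h z) = (\<Sum>z\<in>S \<inter> Z. zero_mult h z)"
    by (intro sum.mono_neutral_right) auto
  also have "\<dots> \<le> (\<Sum>z\<in>Z. zero_mult h z)"
    by (rule sum_mono2[OF assms(1)]) simp_all
  finally show ?thesis .
next
  case False
  then show ?thesis by (simp only: sum.infinite[OF False] zero_le)
qed

lemma zero_count_le_zorder_sum: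
  assumes hol: "h holomorphic_on ball a R'" and w: "w \<in> ball a R'" "h w \<noteq> 0"
    and "R \<le> r" "r < R'"
  shows "zero_count_le h (ball a R) (nat (\<Sum>p\<in>{p\<in>ball a r. h p = 0}. zorder h p))"
  unfolding zero_count_le_def
proof (intro allI impI)
  fix S assume S: "finite S" "S \<subseteq> ball a R"
  let ?Z = "{p\<in>ball a r. h p = 0}"
  have "finite {p\<in>cball a r. h p = 0}"
    using assms by (intro holomorphic_finite_zeros_in_compact[OF hol _ _ _ _ w]) auto
  then have "finite ?Z" by (rule finite_subset[rotated]) auto
  moreover have "{z\<in>S. h z = 0} \<subseteq> ?Z" using S \<open>R \<le> r\<close> by auto
  ultimately have "(\<Sum>z\<in>S. zero_mult h z) \<le> (\<Sum>z\<in>?Z. zero_mult h z)"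
    by (rule sum_zero_mult_le_zeros)
  also have "\<dots> = enat (nat (\<Sum>p\<in>?Z. zorder h p))"
    using \<open>r < R'\<close> by (intro sum_zero_mult_eq_zorder[OF hol _ _ w]) auto
  finally show "(\<Sum>z\<in>S. zero_mult h z) \<le> enat (nat (\<Sum>p\<in>?Z. zorder h p))" .
qed

lemma sp_valent_iff_zero_count_le:
  "sp_valent s p f \<Omega> \<longleftrightarrow> (\<forall>P. degree P \<le> s \<longrightarrow> zero_count_le (\<lambda>w. f w - poly P w) \<Omega> p)"
  by (simp add: sp_valent_def zero_count_le_def)

section \<open>Rouche's theorem on discs\<close>

lemma cball_subset_open_imp_ball_subset:
  fixes a :: "'a::euclidean_space"
  assumes "open U" "cball a r \<subseteq> U"
  obtains r' where "r < r'" "ball a r' \<subseteq> U"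
proof (cases "r < 0")
  case True
  then show ?thesis by (intro that[of "r / 2"]) (simp_all add: ball_empty)
next
  case False
  obtain e where e: "e > 0" "(\<Union>x\<in>cball a r. ball x e) \<subseteq> U"
    using compact_subset_open_imp_ball_epsilon_subset[OF compact_cball assms] .
  have "ball a (r + e) \<subseteq> U"
  proof
    fix z assume z: "z \<in> ball a (r + e)"
    have "\<exists>x\<in>cball a r. z \<in> ball x e"
    proof (cases "dist a z \<le> r")
      case True
      then show ?thesis using e(1) by (intro bexI[of _ z]) simp_all
    next
      case far: False
      have "dist a z > 0" using far False by linarith
      define t where "t = r / dist a z"
      have t: "0 \<le> t" "t \<le> 1" using far False by (auto simp: t_def divide_le_eq_1)
      define x where "x = a + t *\<^sub>R (z - a)"
      have "dist a x = t * dist a z"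
        using t by (simp add: x_def dist_norm norm_minus_commute)
      moreover have "dist x z = (1 - t) * dist a z"
      proof -
        have "dist x z = norm (z - x)" by (metis dist_commute dist_norm)
        also have "z - x = (1 - t) *\<^sub>R (z - a)" by (simp add: x_def algebra_simps)
        also have "norm \<dots> = (1 - t) * norm (z - a)" using t by simp
        also have "norm (z - a) = dist a z" by (metis dist_commute dist_norm)
        finally show ?thesis .
      qed
      moreover have "t * dist a z = r" using \<open>dist a z > 0\<close> by (simp add: t_def)
      moreover have "(1 - t) * dist a z = dist a z - t * dist a z" by (simp add: left_diff_distrib)
      moreover have "dist a z < r + e" using z by simp
      ultimately have "dist a x \<le> r" "dist x z < e" by linarith+
      then show ?thesis using mem_cball mem_ball by blast
    qed
    then show "z \<in> U" using e(2) by blast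
  qed
  then show ?thesis using e by (intro that[of "r + e"]) auto
qed

lemma exists_radius_avoiding_finite:
  fixes Z :: "'a::real_normed_vector set"
  assumes "finite Z" "r1 < r2"
  obtains r where "r1 < r" "r < r2" "sphere a r \<inter> Z = {}"
proof -
  have "infinite ({r1<..<r2} - dist a ` Z)"
    using assms by (intro Diff_infinite_finite finite_imageI) auto
  then obtain r where "r \<in> {r1<..<r2} - dist a ` Z"
    by (metis ex_in_conv finite.emptyI)
  then show ?thesis by (intro that[of r]) auto
qed

lemma exists_zero_free_circle:
  assumes hol: "h holomorphic_on ball a R'" and w: "w \<in> ball a R'" "h w \<noteq> 0" and "R < R'"
  obtains r where "R < r" "r < R'" "\<forall>z\<in>sphere a r. h z \<noteq> 0"
proof -
  define R1 where "R1 = (R + R') / 2"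
  have R1: "R < R1" "R1 < R'" using \<open>R < R'\<close> by (auto simp: R1_def)
  then have "finite {z\<in>cball a R1. h z = 0}"
    by (intro holomorphic_finite_zeros_in_compact[OF hol _ _ _ _ w]) auto
  then obtain r where r: "R < r" "r < R1" "sphere a r \<inter> {z\<in>cball a R1. h z = 0} = {}"
    by (rule exists_radius_avoiding_finite[OF _ R1(1)])
  have "r < R'" using r(2) R1(2) by linarith
  moreover have "\<forall>z\<in>sphere a r. h z \<noteq> 0"
  proof (intro ballI notI)
    fix z assume "z \<in> sphere a r" "h z = 0"
    then have "z \<in> sphere a r \<inter> {z\<in>cball a R1. h z = 0}" using r(2) by simp
    then show False using r(3) by (metis empty_iff)
  qed
  ultimately show ?thesis by (rule that[OF r(1)])
qed

lemma compact_nonvanishing_norm_ge: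
  fixes g :: "'a::topological_space \<Rightarrow> 'b::real_normed_vector"
  assumes "compact S" "continuous_on S g" "\<forall>z\<in>S. g z \<noteq> 0"
  obtains \<delta> where "\<delta> > 0" "\<forall>z\<in>S. \<delta> \<le> norm (g z)"
proof (cases "S = {}")
  case True
  then show ?thesis by (intro that[of 1]) simp_all
next
  case False
  have "continuous_on S (\<lambda>z. norm (g z))" using assms(2) by (rule continuous_on_norm)
  then obtain z0 where "z0 \<in> S" "\<forall>z\<in>S. norm (g z0) \<le> norm (g z)"
    using continuous_attains_inf[OF assms(1) False] by blast
  then show ?thesis using assms(3) by (intro that[of "norm (g z0)"]) simp_all
qed

lemma sum_winding_number_zorder_circlepath:
  assumes "finite {p\<in>S. h p = 0}" "ball a r \<subseteq> S" "0 < r"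
    and "\<forall>z\<in>sphere a r. h z \<noteq> 0"
  shows "(\<Sum>p\<in>{p\<in>S. h p = 0}. winding_number (circlepath a r) p * of_int (zorder h p))
       = of_int (\<Sum>p\<in>{p\<in>ball a r. h p = 0}. zorder h p)"
proof -
  have "(\<Sum>p\<in>{p\<in>S. h p = 0}. winding_number (circlepath a r) p * of_int (zorder h p))
      = (\<Sum>p\<in>{p\<in>ball a r. h p = 0}. winding_number (circlepath a r) p * of_int (zorder h p))"
  proof (rule sum.mono_neutral_right[OF assms(1)])
    show "{p\<in>ball a r. h p = 0} \<subseteq> {p\<in>S. h p = 0}" using assms(2) by auto
    show "\<forall>p\<in>{p\<in>S. h p = 0} - {p\<in>ball a r. h p = 0}.
            winding_number (circlepath a r) p * of_int (zorder h p) = 0"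
      using assms(3,4) by (auto intro!: winding_number_zero_outside[of _ "cball a r"])
  qed
  also have "\<dots> = of_int (\<Sum>p\<in>{p\<in>ball a r. h p = 0}. zorder h p)"
    unfolding of_int_sum
    by (intro sum.cong) (auto simp: winding_number_circlepath dist_norm norm_minus_commute)
  finally show ?thesis .
qed

lemma Rouche_zorder_sum_ball:
  assumes holg: "g holomorphic_on U" and holh: "h holomorphic_on U"
    and "open U" "cball a r \<subseteq> U" "0 < r"
    and less: "\<forall>z\<in>sphere a r. norm (h z - g z) < norm (g z)"
  shows "(\<Sum>p\<in>{p\<in>ball a r. h p = 0}. zorder h p) = (\<Sum>p\<in>{p\<in>ball a r. g p = 0}. zorder g p)"
proof -
  have g_sphere: "\<forall>z\<in>sphere a r. g z \<noteq> 0" and h_sphere: "\<forall>z\<in>sphere a r. h z \<noteq> 0"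
    using less by auto
  obtain r' where r': "r < r'" "ball a r' \<subseteq> U"
    using cball_subset_open_imp_ball_subset assms(3,4) by blast
  define S where "S = ball a ((r + r') / 2)"
  have S: "ball a r \<subseteq> S" "cball a r \<subseteq> S" "closure S \<subseteq> ball a r'" "S \<subseteq> U"
    using r' \<open>0 < r\<close> by (auto simp: S_def)
  define z0 where "z0 = a + of_real r"
  have z0: "z0 \<in> sphere a r" using \<open>0 < r\<close> by (simp add: z0_def dist_norm)
  have finite_zeros: "finite {p\<in>S. k p = 0}"
    if "k holomorphic_on U" "k z0 \<noteq> 0" for k
  proof (rule finite_subset)
    show "{p\<in>S. k p = 0} \<subseteq> {p\<in>closure S. k p = 0}" using closure_subset by blast
    have "k holomorphic_on ball a r'" using that(1) r'(2) by (rule holomorphic_on_subset)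
    moreover have "z0 \<in> ball a r'" using z0 r'(1) by simp
    ultimately show "finite {p\<in>closure S. k p = 0}"
      using S(3) that(2) by (intro holomorphic_finite_zeros_in_compact[of k "ball a r'" _ z0])
        (simp_all add: S_def)
  qed
  have finite_g: "finite {p\<in>S. g p = 0}" and finite_h: "finite {p\<in>S. h p = 0}"
    using finite_zeros holg holh g_sphere h_sphere z0 by auto
  have "(\<Sum>p\<in>{p\<in>S. g p + (h p - g p) = 0}. winding_number (circlepath a r) p * zorder (\<lambda>p. g p + (h p - g p)) p)
      = (\<Sum>p\<in>{p\<in>S. g p = 0}. winding_number (circlepath a r) p * zorder g p)"
  proof (rule Rouche_theorem)
    show "finite {p\<in>S. g p + (h p - g p) = 0}" using finite_h by simp
    show "g holomorphic_on S" "(\<lambda>p. h p - g p) holomorphic_on S"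
      using holomorphic_on_subset[OF holg S(4)] holomorphic_on_subset[OF holh S(4)]
      by (auto intro!: holomorphic_intros)
    show "path_image (circlepath a r) \<subseteq> S" using S(2) \<open>0 < r\<close> by auto
    show "\<forall>z\<in>path_image (circlepath a r). norm (h z - g z) < norm (g z)"
      using less \<open>0 < r\<close> by simp
    show "\<forall>z. z \<notin> S \<longrightarrow> winding_number (circlepath a r) z = 0"
      using S(2) \<open>0 < r\<close> by (auto intro!: winding_number_zero_outside[of _ "cball a r"])
  qed (fact finite_g | simp add: S_def)+
  then have Rouche: "(\<Sum>p\<in>{p\<in>S. h p = 0}. winding_number (circlepath a r) p * of_int (zorder h p))
      = (\<Sum>p\<in>{p\<in>S. g p = 0}. winding_number (circlepath a r) p * of_int (zorder g p))"
    by simp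
  have "complex_of_int (\<Sum>p\<in>{p\<in>ball a r. h p = 0}. zorder h p)
      = (\<Sum>p\<in>{p\<in>S. h p = 0}. winding_number (circlepath a r) p * of_int (zorder h p))"
    by (rule sum_winding_number_zorder_circlepath[OF finite_h S(1) \<open>0 < r\<close> h_sphere, symmetric])
  also have "\<dots> = (\<Sum>p\<in>{p\<in>S. g p = 0}. winding_number (circlepath a r) p * of_int (zorder g p))"
    by (rule Rouche)
  also have "\<dots> = complex_of_int (\<Sum>p\<in>{p\<in>ball a r. g p = 0}. zorder g p)"
    by (rule sum_winding_number_zorder_circlepath[OF finite_g S(1) \<open>0 < r\<close> g_sphere])
  finally show ?thesis by (simp only: of_int_eq_iff)
qed

section \<open>Compact families of holomorphic functions\<close>

text \<open>
  Take a circle around \<open>a\<close> of radius between \<open>R\<close> and \<open>R'\<close> on which \<open>H c0\<close> has no zeros.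
  For \<open>c\<close> close to \<open>c0\<close>, Rouche's theorem gives \<open>H c\<close> as many zeros inside it as \<open>H c0\<close>.
\<close>

lemma zero_count_locally_bounded:
  fixes H :: "'c::topological_space \<Rightarrow> complex \<Rightarrow> complex"
  assumes hol: "\<And>c. c \<in> K \<Longrightarrow> H c holomorphic_on ball a R'"
    and nonzero: "\<And>c. c \<in> K \<Longrightarrow> \<exists>w\<in>ball a R'. H c w \<noteq> 0"
    and close: "\<And>c0 \<rho> \<epsilon>. c0 \<in> K \<Longrightarrow> \<rho> < R' \<Longrightarrow> \<epsilon> > 0 \<Longrightarrow>
        \<exists>V. open V \<and> c0 \<in> V \<and> (\<forall>c\<in>V \<inter> K. \<forall>z\<in>cball a \<rho>. norm (H c z - H c0 z) < \<epsilon>)"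
    and "0 < R" "R < R'" and c0: "c0 \<in> K"
  shows "\<exists>V N. open V \<and> c0 \<in> V \<and> (\<forall>c\<in>V \<inter> K. zero_count_le (H c) (ball a R) N)"
proof -
  obtain w0 where "w0 \<in> ball a R'" "H c0 w0 \<noteq> 0" using nonzero[OF c0] by blast
  then obtain r where r: "R < r" "r < R'" and sphere_nonzero: "\<forall>z\<in>sphere a r. H c0 z \<noteq> 0"
    using exists_zero_free_circle[OF hol[OF c0] _ _ \<open>R < R'\<close>] by blast
  have r_pos: "0 < r" using r(1) \<open>0 < R\<close> by linarith
  have cball_r: "cball a r \<subseteq> ball a R'" using r(2) by (simp add: cball_subset_ball_iff)
  then have "continuous_on (sphere a r) (H c0)"
    by (intro holomorphic_on_imp_continuous_on holomorphic_on_subset[OF hol[OF c0]]) auto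
  then obtain \<delta> where \<delta>: "\<delta> > 0" "\<forall>z\<in>sphere a r. \<delta> \<le> norm (H c0 z)"
    using compact_nonvanishing_norm_ge[OF compact_sphere _ sphere_nonzero] by blast
  from close[OF c0 r(2) \<delta>(1)] obtain V where V: "open V" "c0 \<in> V"
    and near: "\<forall>c\<in>V \<inter> K. \<forall>z\<in>cball a r. norm (H c z - H c0 z) < \<delta>"
    by blast
  define N where "N = nat (\<Sum>p\<in>{p\<in>ball a r. H c0 p = 0}. zorder (H c0) p)"
  show ?thesis
  proof (intro exI conjI ballI)
    show "open V" "c0 \<in> V" by (fact V)+
    fix c assume c: "c \<in> V \<inter> K"
    then have cK: "c \<in> K" by blast
    have "(\<Sum>p\<in>{p\<in>ball a r. H c p = 0}. zorder (H c) p)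
        = (\<Sum>p\<in>{p\<in>ball a r. H c0 p = 0}. zorder (H c0) p)"
    proof (rule Rouche_zorder_sum_ball[OF hol[OF c0] hol[OF cK] open_ball cball_r r_pos])
      show "\<forall>z\<in>sphere a r. norm (H c z - H c0 z) < norm (H c0 z)"
      proof
        fix z assume z: "z \<in> sphere a r"
        then have "z \<in> cball a r" by simp
        then have "norm (H c z - H c0 z) < \<delta>" using near c by blast
        also have "\<delta> \<le> norm (H c0 z)" using \<delta>(2) z by blast
        finally show "norm (H c z - H c0 z) < norm (H c0 z)" .
      qed
    qed
    moreover obtain w where "w \<in> ball a R'" "H c w \<noteq> 0" using nonzero[OF cK] by blast
    then have "zero_count_le (H c) (ball a R) (nat (\<Sum>p\<in>{p\<in>ball a r. H c p = 0}. zorder (H c) p))"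
      using r by (intro zero_count_le_zorder_sum[OF hol[OF cK]]) simp_all
    ultimately show "zero_count_le (H c) (ball a R) N"
      unfolding N_def by simp
  qed
qed

lemma compact_family_zero_count_bounded:
  fixes H :: "'c::topological_space \<Rightarrow> complex \<Rightarrow> complex"
  assumes "compact K"
    and hol: "\<And>c. c \<in> K \<Longrightarrow> H c holomorphic_on ball a R'"
    and nonzero: "\<And>c. c \<in> K \<Longrightarrow> \<exists>w\<in>ball a R'. H c w \<noteq> 0"
    and close: "\<And>c0 \<rho> \<epsilon>. c0 \<in> K \<Longrightarrow> \<rho> < R' \<Longrightarrow> \<epsilon> > 0 \<Longrightarrow>
        \<exists>V. open V \<and> c0 \<in> V \<and> (\<forall>c\<in>V \<inter> K. \<forall>z\<in>cball a \<rho>. norm (H c z - H c0 z) < \<epsilon>)"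
    and "0 < R" "R < R'"
  shows "\<exists>N. \<forall>c\<in>K. zero_count_le (H c) (ball a R) N"
proof -
  have "\<forall>c0\<in>K. \<exists>V N. open V \<and> c0 \<in> V \<and> (\<forall>c\<in>V \<inter> K. zero_count_le (H c) (ball a R) N)"
  proof
    fix c0 assume "c0 \<in> K"
    with hol nonzero close assms(5,6)
    show "\<exists>V N. open V \<and> c0 \<in> V \<and> (\<forall>c\<in>V \<inter> K. zero_count_le (H c) (ball a R) N)"
      by (rule zero_count_locally_bounded)
  qed
  from bchoice[OF this] obtain V where
    "\<forall>c0\<in>K. \<exists>N. open (V c0) \<and> c0 \<in> V c0 \<and> (\<forall>c\<in>V c0 \<inter> K. zero_count_le (H c) (ball a R) N)" ..
  from bchoice[OF this] obtain N where VN: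
    "\<forall>c0\<in>K. open (V c0) \<and> c0 \<in> V c0 \<and> (\<forall>c\<in>V c0 \<inter> K. zero_count_le (H c) (ball a R) (N c0))" ..
  have "\<And>c0. c0 \<in> K \<Longrightarrow> open (V c0)" "K \<subseteq> (\<Union>c0\<in>K. V c0)"
    using VN by blast+
  then obtain C where C: "C \<subseteq> K" "finite C" "K \<subseteq> (\<Union>c0\<in>C. V c0)"
    by (rule compactE_image[OF \<open>compact K\<close>])
  show ?thesis
  proof (intro exI ballI)
    fix c assume "c \<in> K"
    then obtain c0 where c0: "c0 \<in> C" "c \<in> V c0" using C(3) by blast
    then have "zero_count_le (H c) (ball a R) (N c0)"
      using VN C(1) \<open>c \<in> K\<close> by blast
    moreover have "N c0 \<le> (\<Sum>c\<in>C. N c)"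
      using C(2) c0(1) by (intro member_le_sum) simp_all
    ultimately show "zero_count_le (H c) (ball a R) (\<Sum>c\<in>C. N c)"
      by (rule zero_count_le_mono)
  qed
qed

section \<open>Pencils of a function and polynomials\<close>

definition poly_pencil :: "(complex \<Rightarrow> complex) \<Rightarrow> nat \<Rightarrow> (nat \<Rightarrow> complex) \<Rightarrow> complex \<Rightarrow> complex" where
  "poly_pencil f s c = (\<lambda>z. c 0 * f z - (\<Sum>i\<le>s. c (Suc i) * z ^ i))"

lemma holomorphic_on_poly_pencil:
  "f holomorphic_on U \<Longrightarrow> poly_pencil f s c holomorphic_on U"
  unfolding poly_pencil_def by (intro holomorphic_intros)

lemma poly_pencil_diff:
  "poly_pencil f s c z - poly_pencil f s d z = poly_pencil f s (\<lambda>i. c i - d i) z"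
  by (simp add: poly_pencil_def algebra_simps sum_subtractf)

lemma norm_poly_pencil_le:
  assumes c: "\<And>i. i \<le> Suc s \<Longrightarrow> norm (c i) \<le> \<eta>" and "norm (f z) \<le> B" "norm z \<le> \<rho>"
  shows "norm (poly_pencil f s c z) \<le> \<eta> * (B + (\<Sum>i\<le>s. \<rho> ^ i))"
proof -
  have "0 \<le> \<eta>" using c[OF le0] by (rule order_trans[OF norm_ge_zero])
  have "norm (poly_pencil f s c z) \<le> norm (c 0 * f z) + (\<Sum>i\<le>s. norm (c (Suc i) * z ^ i))"
    unfolding poly_pencil_def by (rule order_trans[OF norm_triangle_ineq4 add_left_mono[OF norm_sum]])
  also have "\<dots> \<le> \<eta> * B + (\<Sum>i\<le>s. \<eta> * \<rho> ^ i)"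
  proof (rule add_mono)
    show "norm (c 0 * f z) \<le> \<eta> * B"
      unfolding norm_mult using c[of 0] assms(2) \<open>0 \<le> \<eta>\<close> by (intro mult_mono) auto
    show "(\<Sum>i\<le>s. norm (c (Suc i) * z ^ i)) \<le> (\<Sum>i\<le>s. \<eta> * \<rho> ^ i)"
      unfolding norm_mult norm_power using c assms(3) \<open>0 \<le> \<eta>\<close>
      by (intro sum_mono mult_mono power_mono) auto
  qed
  finally show ?thesis by (simp add: algebra_simps sum_distrib_left)
qed

lemma poly_pencil_uniformly_close:
  assumes "continuous_on (cball 0 \<rho>) f" "\<epsilon> > 0"
  shows "\<exists>V. open V \<and> c0 \<in> V \<and>
    (\<forall>c\<in>V. \<forall>z\<in>cball 0 \<rho>. norm (poly_pencil f s c z - poly_pencil f s c0 z) < \<epsilon>)"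
proof -
  obtain B where B: "B > 0" "\<forall>z\<in>cball 0 \<rho>. norm (f z) \<le> B"
    using compact_continuous_image[OF assms(1) compact_cball] compact_imp_bounded bounded_pos
    by (metis image_eqI)
  define M where "M = B + (\<Sum>i\<le>s. \<bar>\<rho>\<bar> ^ i)"
  have "M > 0" unfolding M_def using B(1) by (intro add_pos_nonneg sum_nonneg) auto
  define \<eta> where "\<eta> = \<epsilon> / (2 * M)"
  have "\<eta> > 0" using \<open>M > 0\<close> assms(2) by (simp add: \<eta>_def)
  define V where "V = {c. \<forall>i\<in>{..Suc s}. c i \<in> ball (c0 i) \<eta>}"
  have "open V"
    unfolding V_def by (rule product_topology_basis'[where x="\<lambda>i. i"]) auto
  moreover have "c0 \<in> V" using \<open>\<eta> > 0\<close> by (simp add: V_def)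
  moreover have "norm (poly_pencil f s c z - poly_pencil f s c0 z) < \<epsilon>"
    if "c \<in> V" "z \<in> cball 0 \<rho>" for c z
  proof -
    have "\<And>i. i \<le> Suc s \<Longrightarrow> norm (c i - c0 i) \<le> \<eta>"
      using \<open>c \<in> V\<close> by (force simp: V_def dist_norm norm_minus_commute)
    moreover have "norm z \<le> \<bar>\<rho>\<bar>" using that(2) by simp
    ultimately have "norm (poly_pencil f s (\<lambda>i. c i - c0 i) z) \<le> \<eta> * M"
      unfolding M_def using B(2) that(2) by (intro norm_poly_pencil_le) auto
    also have "\<dots> < \<epsilon>" using \<open>M > 0\<close> assms(2) by (simp add: \<eta>_def)
    finally show ?thesis by (simp only: poly_pencil_diff)
  qed
  ultimately show ?thesis by blast
qed

lemma poly_pencil_not_identically_zero: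
  assumes not_poly: "\<not> (\<exists>P :: complex poly. \<forall>z\<in>cball 0 R. f z = poly P z)"
    and "0 < R" and c: "\<exists>i\<le>Suc s. c i \<noteq> 0"
  shows "\<exists>w\<in>cball 0 R. poly_pencil f s c w \<noteq> 0"
proof (rule ccontr)
  assume "\<not> ?thesis"
  then have zero: "\<And>w. w \<in> cball 0 R \<Longrightarrow> c 0 * f w = (\<Sum>i\<le>s. c (Suc i) * w ^ i)"
    by (auto simp: poly_pencil_def)
  show False
  proof (cases "c 0 = 0")
    case False
    define P where "P = (\<Sum>i\<le>s. monom (c (Suc i) / c 0) i)"
    have "f z = poly P z" if "z \<in> cball 0 R" for z
    proof -
      have "f z = c 0 * f z / c 0" using False by simp
      also have "\<dots> = (\<Sum>i\<le>s. c (Suc i) * z ^ i) / c 0" by (simp only: zero[OF that])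
      finally
      show ?thesis by (simp add: P_def poly_sum poly_monom sum_divide_distrib)
    qed
    then show False using not_poly by blast
  next
    case True
    from c obtain i where i: "i \<le> Suc s" "c i \<noteq> 0" by blast
    with True obtain k where "i = Suc k" by (cases i) auto
    with i have "k \<le> s" "c (Suc k) \<noteq> 0" by auto
    then have "finite {z. (\<Sum>i\<le>s. c (Suc i) * z ^ i) = 0}"
      by (intro polyfun_rootbound_finite) auto
    moreover have "cball 0 R \<subseteq> {z. (\<Sum>i\<le>s. c (Suc i) * z ^ i) = 0}"
      using zero True by auto
    ultimately have "finite (cball (0::complex) R)" by (rule finite_subset[rotated])
    then show False using uncountable_cball[OF \<open>0 < R\<close>] countable_finite by blast
  qed
qed

lemma compact_normalized_coefficients:
  "compact {c :: nat \<Rightarrow> complex. (\<forall>i. norm (c i) \<le> 1) \<and> (\<exists>i\<le>n. norm (c i) = 1)}"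
proof -
  have "compactin (product_topology (\<lambda>_. euclidean) UNIV) (PiE UNIV (\<lambda>_. cball (0::complex) 1))"
    by (simp add: compactin_PiE)
  then have "compact (PiE UNIV (\<lambda>_. cball (0::complex) 1))"
    by (simp add: euclidean_product_topology)
  moreover have "closed {c :: nat \<Rightarrow> complex. \<exists>i\<le>n. norm (c i) = 1}"
  proof -
    have "closed {c :: nat \<Rightarrow> complex. norm (c i) = 1}" for i
      by (intro closed_Collect_eq continuous_intros continuous_on_norm continuous_on_product_coordinates)
    then have "closed (\<Union>i\<le>n. {c :: nat \<Rightarrow> complex. norm (c i) = 1})" by auto
    moreover have "(\<Union>i\<le>n. {c :: nat \<Rightarrow> complex. norm (c i) = 1}) = {c. \<exists>i\<le>n. norm (c i) = 1}" by auto
    ultimately show ?thesis by simp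
  qed
  ultimately have "compact (PiE UNIV (\<lambda>_. cball (0::complex) 1) \<inter> {c. \<exists>i\<le>n. norm (c i) = 1})"
    by (rule compact_Int_closed)
  moreover have "PiE UNIV (\<lambda>_. cball (0::complex) 1) \<inter> {c. \<exists>i\<le>n. norm (c i) = 1}
      = {c. (\<forall>i. norm (c i) \<le> 1) \<and> (\<exists>i\<le>n. norm (c i) = 1)}"
    by (auto simp: PiE_UNIV_domain)
  ultimately show ?thesis by simp
qed

lemma poly_minus_eq_scaled_pencil:
  fixes P :: "complex poly"
  assumes "degree P \<le> s"
  obtains c M where "\<forall>i. norm (c i) \<le> 1" "\<exists>i\<le>Suc s. norm (c i) = 1" "M > 0"
    "\<And>w. f w - poly P w = of_real M * poly_pencil f s c w"
proof -
  define d :: "nat \<Rightarrow> complex" where "d = (\<lambda>i. case i of 0 \<Rightarrow> 1 | Suc j \<Rightarrow> coeff P j)"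
  define M where "M = Max ((\<lambda>i. norm (d i)) ` {..Suc s})"
  have d_le_M: "norm (d i) \<le> M" if "i \<le> Suc s" for i
    unfolding M_def using that by (intro Max_ge) auto
  then have "1 \<le> M" using d_le_M[of 0] by (simp add: d_def)
  have d_le: "norm (d i) \<le> M" for i
  proof (cases "i \<le> Suc s")
    case True
    then show ?thesis by (rule d_le_M)
  next
    case False
    then obtain j where "i = Suc j" "s < j" by (cases i) auto
    then have "d i = 0" using assms by (simp add: d_def coeff_eq_0)
    then show ?thesis using \<open>1 \<le> M\<close> by simp
  qed
  obtain i where "i \<le> Suc s" "norm (d i) = M"
    using Max_in[of "(\<lambda>i. norm (d i)) ` {..Suc s}"] unfolding M_def[symmetric] by auto
  define c where "c i = d i / of_real M" for i
  have Mc: "of_real M * c i = d i" for i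
    using \<open>1 \<le> M\<close> by (simp add: c_def)
  have norm_c: "norm (c i) = norm (d i) / M" for i
    using \<open>1 \<le> M\<close> by (simp add: c_def norm_divide)
  show ?thesis
  proof (rule that)
    show "\<forall>i. norm (c i) \<le> 1"
      using d_le \<open>1 \<le> M\<close> by (simp add: norm_c)
    show "\<exists>i\<le>Suc s. norm (c i) = 1"
      using \<open>i \<le> Suc s\<close> \<open>norm (d i) = M\<close> \<open>1 \<le> M\<close> by (intro exI[of _ i]) (simp add: norm_c)
    show "M > 0" using \<open>1 \<le> M\<close> by simp
    fix w
    have "of_real M * poly_pencil f s c w
        = (of_real M * c 0) * f w - (\<Sum>i\<le>s. (of_real M * c (Suc i)) * w ^ i)"
      by (simp add: poly_pencil_def right_diff_distrib sum_distrib_left mult.assoc)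
    also have "\<dots> = f w - (\<Sum>i\<le>s. coeff P i * w ^ i)"
      by (simp add: Mc d_def)
    also have "(\<Sum>i\<le>s. coeff P i * w ^ i) = poly P w"
      unfolding poly_altdef using assms by (intro sum.mono_neutral_right) (auto simp: coeff_eq_0)
    finally show "f w - poly P w = of_real M * poly_pencil f s c w" by simp
  qed
qed

lemma poly_pencil_zero_count_bounded:
  assumes holf: "f holomorphic_on ball 0 R'" and "0 < R" "R < R'"
    and not_poly: "\<not> (\<exists>P :: complex poly. \<forall>z\<in>cball 0 R. f z = poly P z)"
  shows "\<exists>N. \<forall>c. (\<forall>i. norm (c i) \<le> 1) \<and> (\<exists>i\<le>Suc s. norm (c i) = 1) \<longrightarrow>
    zero_count_le (poly_pencil f s c) (ball 0 R) N"
proof -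
  define K where "K = {c :: nat \<Rightarrow> complex. (\<forall>i. norm (c i) \<le> 1) \<and> (\<exists>i\<le>Suc s. norm (c i) = 1)}"
  have "compact K" unfolding K_def by (rule compact_normalized_coefficients)
  moreover have "\<And>c. c \<in> K \<Longrightarrow> poly_pencil f s c holomorphic_on ball 0 R'"
    using holomorphic_on_poly_pencil[OF holf] by blast
  moreover have "\<exists>w\<in>ball 0 R'. poly_pencil f s c w \<noteq> 0" if "c \<in> K" for c
  proof -
    from that obtain i where "i \<le> Suc s" "norm (c i) = 1" by (auto simp: K_def)
    then have "\<exists>i\<le>Suc s. c i \<noteq> 0" by (intro exI[of _ i]) auto
    from poly_pencil_not_identically_zero[OF not_poly \<open>0 < R\<close> this]
    obtain w where "w \<in> cball 0 R" "poly_pencil f s c w \<noteq> 0" ..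
    moreover have "cball 0 R \<subseteq> ball 0 R'" using \<open>R < R'\<close> by (auto simp: subset_eq)
    ultimately show ?thesis by blast
  qed
  moreover have "\<exists>V. open V \<and> c0 \<in> V \<and>
      (\<forall>c\<in>V \<inter> K. \<forall>z\<in>cball 0 \<rho>. norm (poly_pencil f s c z - poly_pencil f s c0 z) < \<epsilon>)"
    if "\<rho> < R'" "\<epsilon> > 0" for c0 \<rho> \<epsilon>
  proof -
    have "cball 0 \<rho> \<subseteq> ball 0 R'" using that(1) by (auto simp: subset_eq)
    then have "continuous_on (cball 0 \<rho>) f"
      by (rule holomorphic_on_imp_continuous_on[OF holomorphic_on_subset[OF holf]])
    from poly_pencil_uniformly_close[OF this that(2)] obtain V where "open V" "c0 \<in> V"
      "\<forall>c\<in>V. \<forall>z\<in>cball 0 \<rho>. norm (poly_pencil f s c z - poly_pencil f s c0 z) < \<epsilon>"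
      by blast
    then show ?thesis by (intro exI[of _ V]) auto
  qed
  ultimately have "\<exists>N. \<forall>c\<in>K. zero_count_le (poly_pencil f s c) (ball 0 R) N"
    using \<open>0 < R\<close> \<open>R < R'\<close> by (rule compact_family_zero_count_bounded)
  then show ?thesis by (simp add: K_def)
qed

lemma sp_valent_if_holomorphic_on_larger_ball:
  assumes holf: "f holomorphic_on ball 0 R'" and "0 < R" "R < R'"
    and not_poly: "\<not> (\<exists>P :: complex poly. \<forall>z\<in>cball 0 R. f z = poly P z)"
  shows "\<exists>p. sp_valent s p f (ball 0 R)"
proof -
  obtain N where N: "\<And>c. (\<forall>i. norm (c i) \<le> 1) \<Longrightarrow> \<exists>i\<le>Suc s. norm (c i) = 1 \<Longrightarrow>
      zero_count_le (poly_pencil f s c) (ball 0 R) N"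
    using poly_pencil_zero_count_bounded[OF assms] by blast
  have "sp_valent s N f (ball 0 R)"
    unfolding sp_valent_iff_zero_count_le
  proof (intro allI impI)
    fix P :: "complex poly" assume "degree P \<le> s"
    then obtain c M where c: "\<forall>i. norm (c i) \<le> 1" "\<exists>i\<le>Suc s. norm (c i) = 1" and "M > 0"
      and eq: "\<And>w. f w - poly P w = of_real M * poly_pencil f s c w"
      by (rule poly_minus_eq_scaled_pencil[where f = f]) (rule that)
    have "zero_count_le (\<lambda>w. of_real M * poly_pencil f s c w) (ball 0 R) N
        \<longleftrightarrow> zero_count_le (poly_pencil f s c) (ball 0 R) N"
      using \<open>R < R'\<close> \<open>M > 0\<close>
      by (intro zero_count_le_cmult[OF holomorphic_on_poly_pencil[OF holf] open_ball]) (auto simp: subset_eq)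
    with N[OF c] have "zero_count_le (\<lambda>w. of_real M * poly_pencil f s c w) (ball 0 R) N" by blast
    then show "zero_count_le (\<lambda>w. f w - poly P w) (ball 0 R) N" by (simp only: eq)
  qed
  then show ?thesis ..
qed

theorem mainTheorem3:
  fixes f :: "complex \<Rightarrow> complex" and R :: real
  assumes "R > 0"
    and "f analytic_on cball 0 R"
    and "\<not> (\<exists>P :: complex poly. \<forall>z\<in>cball 0 R. f z = poly P z)"
  shows "\<forall>s::nat. \<exists>p::nat. sp_valent s p f (ball 0 R)"
proof
  fix s :: nat
  obtain T where T: "open T" "cball 0 R \<subseteq> T" "f holomorphic_on T"
    using assms(2) analytic_on_holomorphic by blast
  obtain R' where "R < R'" "ball 0 R' \<subseteq> T"
    by (rule cball_subset_open_imp_ball_subset[OF T(1,2)])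
  then have "f holomorphic_on ball 0 R'" using T(3) holomorphic_on_subset by blast
  then show "\<exists>p. sp_valent s p f (ball 0 R)"
    using assms(1,3) \<open>R < R'\<close> by (intro sp_valent_if_holomorphic_on_larger_ball)
qed

end
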